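(* Let $(X,d)$ be a separable metric space and let $\mu$ be a finite nonatomic Radon measure on $X$ giving positive measure to each nonempty open set. Let $T$ be an invertible measure-preserving transformation of $(X,\mu)$ that is rigid. Then for every $\epsilon>0$ there exist a measurable set $B\subset X$ with $\mu(B)<\epsilon$ and a sequence of natural numbers $m_j\to\infty$ such that $\sup_{x\in X\setminus B} d(x,T^{m_j}x)\to 0$ as $j\to\infty$; that is, $T$ is uniformly rigid on $X\setminus B$.
   Context: $T$ is rigid if there is a sequence of natural numbers $n_k\to\infty$ such that $\mu(A\triangle T^{n_k}A)\to 0$ for every measurable $A$ of finite measure. For $Y\subset X$, $T$ is uniformly rigid on $Y$ if there is a sequence $m_j\to\infty$ with $d(y,T^{m_j}y)\to0$ uniformly in $y\in Y$. *)

theory Defs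
  imports "HOL-Analysis.Analysis"
begin

definition sym_diff :: "'a set \<Rightarrow> 'a set \<Rightarrow> 'a set" where
  "sym_diff A B = (A - B) \<union> (B - A)"

definition radon_measure :: "'a::metric_space measure \<Rightarrow> bool" where
  "radon_measure M \<longleftrightarrow> sets M = sets borel \<and>
     (\<forall>x. \<exists>U. open U \<and> x \<in> U \<and> emeasure M U < \<infinity>) \<and>
     (\<forall>A\<in>sets M. emeasure M A = (SUP K\<in>{K. compact K \<and> K \<subseteq> A}. emeasure M K))"

definition atom :: "'a measure \<Rightarrow> 'a set \<Rightarrow> bool" where
  "atom M A \<longleftrightarrow> A \<in> sets M \<and> emeasure M A > 0 \<and>
     (\<forall>B\<in>sets M. B \<subseteq> A \<longrightarrow> emeasure M B = 0 \<or> emeasure M B = emeasure M A)"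

definition nonatomic :: "'a measure \<Rightarrow> bool" where
  "nonatomic M \<longleftrightarrow> (\<nexists>A. atom M A)"

definition invertible_measure_preserving :: "'a measure \<Rightarrow> ('a \<Rightarrow> 'a) \<Rightarrow> bool" where
  "invertible_measure_preserving M T \<longleftrightarrow>
     bij_betw T (space M) (space M) \<and> T \<in> measurable M M \<and>
     the_inv_into (space M) T \<in> measurable M M \<and>
     (\<forall>A\<in>sets M. emeasure M (T -` A \<inter> space M) = emeasure M A)"

definition rigid :: "'a measure \<Rightarrow> ('a \<Rightarrow> 'a) \<Rightarrow> bool" where
  "rigid M T \<longleftrightarrow> (\<exists>n::nat \<Rightarrow> nat. filterlim n at_top sequentially \<and>
     (\<forall>A\<in>sets M. emeasure M A < \<infinity> \<longrightarrow>
        (\<lambda>k. measure M (sym_diff A ((T ^^ n k) ` A))) \<longlonglongrightarrow> 0))"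

definition uniformly_rigid_on :: "('a::metric_space \<Rightarrow> 'a) \<Rightarrow> 'a set \<Rightarrow> bool" where
  "uniformly_rigid_on T Y \<longleftrightarrow> (\<exists>m::nat \<Rightarrow> nat. filterlim m at_top sequentially \<and>
     (\<forall>e>0. \<forall>\<^sub>F j in sequentially. \<forall>y\<in>Y. dist y ((T ^^ m j) y) < e))"

end

theory Submission
  imports Defs
begin

(* Let n_k be a rigidity sequence of T. Then (Lemma rigid_return_tendsto_zero) every
   measurable U is "almost returned": mu(U - T^-(n_k) U) -> 0.  By separability, for
   every delta > 0 finitely many balls of radius delta/2 cover X up to measure eta;
   a point x lying in one of these balls together with T^(n_k) x is moved by less than
   delta.  Hence (Lemma eventually_small_displacement) for large k the iterate T^(n_k)
   moves all points by less than delta outside a set of measure < eta.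
   Finally an Egorov-type diagonal argument (Lemma uniformly_rigid_off_small_set)
   picks m_j = n_(k_j) with displacement < 1/(j+1) outside an exceptional set of
   measure < eps/2^(j+2); the union B of these sets has measure < eps and T is
   uniformly rigid on X - B along m_j. *)

lemma measurable_funpow:
  assumes "T \<in> measurable M M"
  shows "T ^^ n \<in> measurable M M"
proof (induction n)
  case 0 then show ?case by simp
next
  case (Suc n)
  have "T \<circ> (T ^^ n) \<in> measurable M M" by (rule measurable_comp[OF Suc.IH assms])
  then show ?case by (simp only: funpow.simps(2))
qed

lemma emeasure_vimage_funpow:
  assumes "space M = UNIV" and "T \<in> measurable M M"
    and "\<forall>A\<in>sets M. emeasure M (T -` A \<inter> space M) = emeasure M A"
    and "A \<in> sets M"
  shows "emeasure M ((T ^^ n) -` A) = emeasure M A"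
  using assms(4)
proof (induction n arbitrary: A)
  case 0 then show ?case by simp
next
  case (Suc n)
  have "T -` A \<in> sets M" using measurable_sets[OF assms(2) Suc.prems] assms(1) by simp
  then have "emeasure M ((T ^^ n) -` (T -` A)) = emeasure M A"
    using Suc.IH assms(1,3) Suc.prems by simp
  moreover have "(T ^^ Suc n) -` A = (T ^^ n) -` (T -` A)"
    by (simp only: funpow.simps(2) vimage_comp)
  ultimately show ?case by metis
qed

text \<open>If \<open>T\<close> has a measurable two-sided inverse, then images of measurable sets under
  the iterates of \<open>T\<close> are measurable, since \<open>T ` S\<close> is the preimage of \<open>S\<close> under the inverse.\<close>
lemma image_funpow_sets:
  assumes "space M = UNIV" and "g \<in> measurable M M"
    and "\<And>x. g (T x) = x" and "\<And>x. T (g x) = x"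
    and "A \<in> sets M"
  shows "(T ^^ n) ` A \<in> sets M"
proof (induction n)
  case 0 then show ?case using assms(5) by simp
next
  case (Suc n)
  have "(T ^^ Suc n) ` A = T ` ((T ^^ n) ` A)" by (simp only: funpow.simps(2) image_comp)
  also have "\<dots> = g -` ((T ^^ n) ` A)" using assms(3,4) by (auto, metis image_eqI)
  finally have "(T ^^ Suc n) ` A = g -` ((T ^^ n) ` A)" .
  then show ?case using measurable_sets[OF assms(2) Suc.IH] assms(1) by simp
qed

text \<open>For an injective measure-preserving map \<open>f\<close>, the part of \<open>U\<close> leaving \<open>U\<close> under \<open>f\<close>
  has the same measure as the part of \<open>f ` U\<close> outside \<open>U\<close>: the former is the
  \<open>f\<close>-preimage of the latter.\<close>
lemma measure_leaving_eq_measure_image_diff: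
  assumes "inj f" and "f ` U - U \<in> sets M"
    and "\<And>A. A \<in> sets M \<Longrightarrow> measure M (f -` A) = measure M A"
  shows "measure M (U - f -` U) = measure M (f ` U - U)"
proof -
  have "f -` (f ` U - U) = U - f -` U" using assms(1) by (auto simp: inj_def)
  then show ?thesis using assms(2,3) by metis
qed

lemma rigid_return_tendsto_zero:
  assumes "finite_measure M" and "space M = UNIV"
    and "invertible_measure_preserving M T"
    and rig: "\<forall>A\<in>sets M. emeasure M A < \<infinity> \<longrightarrow>
        (\<lambda>k. measure M (sym_diff A ((T ^^ n k) ` A))) \<longlonglongrightarrow> 0"
    and U: "U \<in> sets M"
  shows "(\<lambda>k. measure M (U - (T ^^ n k) -` U)) \<longlonglongrightarrow> 0"
proof -
  interpret finite_measure M by fact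
  have bijT: "bij T" and Tm: "T \<in> measurable M M"
    and gm: "the_inv T \<in> measurable M M"
    and mp: "\<forall>A\<in>sets M. emeasure M (T -` A \<inter> space M) = emeasure M A"
    using assms(2,3) unfolding invertible_measure_preserving_def by auto
  have injT: "inj T" using bijT bij_is_inj by blast
  have img: "(T ^^ j) ` U \<in> sets M" for j
    by (rule image_funpow_sets[OF assms(2) gm _ _ U])
      (use injT bijT in \<open>simp_all add: the_inv_f_f f_the_inv_into_f bij_is_surj\<close>)
  have pres: "A \<in> sets M \<Longrightarrow> measure M ((T ^^ j) -` A) = measure M A" for A j
    using emeasure_vimage_funpow[OF assms(2) Tm mp] by (simp add: measure_def)
  have leave_eq: "measure M (U - (T ^^ j) -` U) = measure M ((T ^^ j) ` U - U)" for j
    using img U pres bij_betw_funpow[OF bijT]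
    by (intro measure_leaving_eq_measure_image_diff) (auto simp: bij_is_inj)
  have sd: "sym_diff U ((T ^^ j) ` U) \<in> sets M" for j
    unfolding sym_diff_def using U img by auto
  have lim: "(\<lambda>k. measure M (sym_diff U ((T ^^ n k) ` U))) \<longlonglongrightarrow> 0"
    using rig U by (simp add: less_top[symmetric])
  have le: "measure M (U - (T ^^ n k) -` U) \<le> measure M (sym_diff U ((T ^^ n k) ` U))" for k
    unfolding leave_eq using sd by (intro finite_measure_mono) (auto simp: sym_diff_def)
  show ?thesis
    by (intro tendsto_sandwich[OF _ _ tendsto_const lim] always_eventually allI) (use le in auto)
qed

lemma finite_balls_cover_almost_all:
  fixes M :: "'a::metric_space measure"
  assumes "separable_space (euclidean :: 'a topology)" and "finite_measure M"
    and "sets M = sets borel" and "r > 0" and "\<eta> > 0"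
  shows "\<exists>F. finite F \<and> measure M (space M - (\<Union>c\<in>F. ball c r)) < \<eta>"
proof -
  interpret finite_measure M by fact
  have spM: "space M = UNIV" using sets_eq_imp_space_eq[OF assms(3)] by simp
  obtain C :: "'a set" where "countable C" and dense: "closure C = UNIV"
    using assms(1) unfolding separable_space_def by auto
  then have range_c: "range (from_nat_into C) = C" by (intro range_from_nat_into) auto
  define V where "V N = (\<Union>i<N. ball (from_nat_into C i) r)" for N
  have Vs: "V N \<in> sets M" for N using assms(3) V_def by auto
  have V_inc: "incseq V" unfolding V_def incseq_def by (auto intro: order_less_le_trans)
  have V_Un: "(\<Union>N. V N) = space M"
  proof -
    have "x \<in> (\<Union>N. V N)" for x
    proof -
      obtain c where "c \<in> C" "x \<in> ball c r"
        using dense closure_approachable[of x C] assms(4) by (auto simp: dist_commute)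
      then obtain i where "x \<in> ball (from_nat_into C i) r" using range_c by (metis imageE)
      then have "x \<in> V (Suc i)" unfolding V_def by auto
      then show ?thesis by blast
    qed
    then show ?thesis using spM by auto
  qed
  have "(\<lambda>N. measure M (V N)) \<longlonglongrightarrow> measure M (\<Union>N. V N)"
    using Vs V_inc by (intro finite_Lim_measure_incseq) auto
  then have "(\<lambda>N. measure M (V N)) \<longlonglongrightarrow> measure M (space M)" by (simp only: V_Un)
  then have "\<forall>\<^sub>F N in sequentially. measure M (space M) - \<eta> < measure M (V N)"
    using assms(5) by (intro order_tendstoD(1)) auto
  then obtain N where "measure M (space M) - \<eta> < measure M (V N)"
    using eventually_happens'[OF sequentially_bot] by blast
  then have "measure M (space M - V N) < \<eta>" using finite_measure_compl[OF Vs] by simp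
  then show ?thesis unfolding V_def
    by (intro exI[of _ "from_nat_into C ` {..<N}"]) auto
qed

text \<open>A point lying together with its
  image in one ball of radius \<open>\<delta>/2\<close> from a finite almost-cover is moved by less than \<open>\<delta>\<close>.\<close>
lemma eventually_small_displacement:
  fixes M :: "'a::metric_space measure"
  assumes "separable_space (euclidean :: 'a topology)" and "finite_measure M"
    and sets_M: "sets M = sets borel"
    and f_meas: "\<And>k. f k \<in> measurable M M"
    and return: "\<And>U. U \<in> sets M \<Longrightarrow> (\<lambda>k. measure M (U - f k -` U)) \<longlonglongrightarrow> 0"
    and "\<delta> > 0" and "\<eta> > 0"
  shows "\<forall>\<^sub>F k in sequentially. \<exists>G\<in>sets M.
           measure M (space M - G) < \<eta> \<and> (\<forall>x\<in>G. dist x (f k x) < \<delta>)"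
proof -
  interpret finite_measure M by fact
  have spM: "space M = UNIV" using sets_eq_imp_space_eq[OF sets_M] by simp
  obtain F where "finite F" and cover: "measure M (space M - (\<Union>c\<in>F. ball c (\<delta>/2))) < \<eta>/2"
    using finite_balls_cover_almost_all[OF assms(1,2) sets_M, of "\<delta>/2" "\<eta>/2"] assms(6,7) by auto
  define W where "W = space M - (\<Union>c\<in>F. ball c (\<delta>/2))"
  have balls: "ball c (\<delta>/2) \<in> sets M" for c using sets_M by simp
  have vim: "f k -` A \<in> sets M" if "A \<in> sets M" for k A
    using measurable_sets[OF f_meas that] spM by simp
  have "(\<lambda>k. \<Sum>c\<in>F. measure M (ball c (\<delta>/2) - f k -` ball c (\<delta>/2))) \<longlonglongrightarrow> (\<Sum>c\<in>F. 0)"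
    using return balls by (intro tendsto_sum) auto
  then have "\<forall>\<^sub>F k in sequentially. (\<Sum>c\<in>F. measure M (ball c (\<delta>/2) - f k -` ball c (\<delta>/2))) < \<eta>/2"
    using assms(7) by (intro order_tendstoD(2)) auto
  then show ?thesis
  proof (rule eventually_mono)
    fix k assume small: "(\<Sum>c\<in>F. measure M (ball c (\<delta>/2) - f k -` ball c (\<delta>/2))) < \<eta>/2"
    define L where "L = (\<Union>c\<in>F. ball c (\<delta>/2) - f k -` ball c (\<delta>/2))"
    define G where "G = (\<Union>c\<in>F. ball c (\<delta>/2) \<inter> f k -` ball c (\<delta>/2))"
    have sets: "G \<in> sets M" "L \<in> sets M" "W \<in> sets M"
      unfolding G_def L_def W_def using balls vim \<open>finite F\<close> by (auto intro: sets.finite_UN)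
    have "measure M (space M - G) \<le> measure M (W \<union> L)"
      using sets by (intro finite_measure_mono) (auto simp: G_def L_def W_def)
    also have "\<dots> \<le> measure M W + measure M L"
      using sets by (intro measure_Un_le) auto
    also have "measure M L \<le> (\<Sum>c\<in>F. measure M (ball c (\<delta>/2) - f k -` ball c (\<delta>/2)))"
      unfolding L_def using balls vim \<open>finite F\<close> by (intro finite_measure_subadditive_finite) auto
    finally have "measure M (space M - G) < \<eta>" using cover small unfolding W_def by simp
    moreover have "dist x (f k x) < \<delta>" if "x \<in> G" for x
    proof -
      obtain c where "dist c x < \<delta>/2" "dist c (f k x) < \<delta>/2"
        using \<open>x \<in> G\<close> unfolding G_def by auto
      then show ?thesis using dist_triangle[of x "f k x" c] by (simp add: dist_commute)
    qed
    ultimately show "\<exists>G\<in>sets M. measure M (space M - G) < \<eta> \<and> (\<forall>x\<in>G. dist x (f k x) < \<delta>)"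
      using sets(1) by blast
  qed
qed

lemma measure_UN_le_geometric:
  assumes "finite_measure M" and "\<And>j. A j \<in> sets M"
    and "\<And>j. measure M (A j) \<le> c / 2 ^ j"
  shows "measure M (\<Union>j. A j) \<le> 2 * c"
proof -
  interpret finite_measure M by fact
  have geo: "(\<lambda>j. c / 2 ^ j) sums (2 * c)"
    using sums_mult[OF geometric_sums[of "1/2::real"], of c]
    by (simp add: power_one_over field_simps)
  have summ: "summable (\<lambda>j. measure M (A j))"
    using assms(3) by (intro summable_comparison_test[OF _ sums_summable[OF geo]]) auto
  have "measure M (\<Union>j. A j) \<le> (\<Sum>j. measure M (A j))"
    using assms(2) summ by (intro finite_measure_subadditive_countably) auto
  also have "\<dots> \<le> (\<Sum>j. c / 2 ^ j)"
    by (rule suminf_le[OF assms(3) summ sums_summable[OF geo]])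
  finally show ?thesis using sums_unique[OF geo] by simp
qed

lemma uniformly_rigid_onI:
  assumes "filterlim m at_top sequentially"
    and "\<And>j y. y \<in> Y \<Longrightarrow> dist y ((T ^^ m j) y) < 1 / real (Suc j)"
  shows "uniformly_rigid_on T Y"
  unfolding uniformly_rigid_on_def
proof (intro exI conjI allI impI)
  fix e :: real assume "e > 0"
  then obtain J where J: "inverse (real (Suc J)) < e" using reals_Archimedean by blast
  have "1 / real (Suc j) \<le> inverse (real (Suc J))" if "J \<le> j" for j
    using that by (simp add: divide_inverse frac_le)
  then show "\<forall>\<^sub>F j in sequentially. \<forall>y\<in>Y. dist y ((T ^^ m j) y) < e"
    unfolding eventually_sequentially using assms(2) J by (meson less_le_trans less_trans)
qed (fact assms(1))

lemma uniformly_rigid_off_small_set: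
  fixes M :: "'a::metric_space measure"
  assumes "finite_measure M" and "filterlim n at_top sequentially" and "\<epsilon> > 0"
    and close: "\<And>\<delta> \<eta>. \<delta> > 0 \<Longrightarrow> \<eta> > 0 \<Longrightarrow> \<forall>\<^sub>F k in sequentially. \<exists>G\<in>sets M.
           measure M (space M - G) < \<eta> \<and> (\<forall>x\<in>G. dist x ((T ^^ n k) x) < \<delta>)"
  shows "\<exists>B\<in>sets M. measure M B < \<epsilon> \<and> uniformly_rigid_on T (space M - B)"
proof -
  have "\<forall>j. \<exists>k\<ge>j. \<exists>G\<in>sets M. measure M (space M - G) < \<epsilon> / 4 / 2 ^ j \<and>
      (\<forall>x\<in>G. dist x ((T ^^ n k) x) < 1 / real (Suc j))"
  proof
    fix j
    have "\<forall>\<^sub>F k in sequentially. k \<ge> j \<and> (\<exists>G\<in>sets M. measure M (space M - G) < \<epsilon> / 4 / 2 ^ j \<and>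
        (\<forall>x\<in>G. dist x ((T ^^ n k) x) < 1 / real (Suc j)))"
      using assms(3) by (intro eventually_conj eventually_ge_at_top close) auto
    then show "\<exists>k\<ge>j. \<exists>G\<in>sets M. measure M (space M - G) < \<epsilon> / 4 / 2 ^ j \<and>
        (\<forall>x\<in>G. dist x ((T ^^ n k) x) < 1 / real (Suc j))"
      using eventually_happens'[OF sequentially_bot] by blast
  qed
  then obtain kk G where kk: "\<And>j. kk j \<ge> j" and G: "\<And>j. G j \<in> sets M"
    and G_small: "\<And>j. measure M (space M - G j) < \<epsilon> / 4 / 2 ^ j"
    and G_close: "\<And>j x. x \<in> G j \<Longrightarrow> dist x ((T ^^ n (kk j)) x) < 1 / real (Suc j)"
    by metis
  define B where "B = (\<Union>j. space M - G j)"
  have "B \<in> sets M" using G B_def by auto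
  moreover have "measure M B \<le> 2 * (\<epsilon> / 4)"
    unfolding B_def using assms(1) G G_small
    by (intro measure_UN_le_geometric) (auto intro: less_imp_le)
  moreover have "filterlim (\<lambda>j. n (kk j)) at_top sequentially"
    using filterlim_compose[OF assms(2) filterlim_at_top_mono[OF filterlim_ident]] kk by auto
  then have "uniformly_rigid_on T (space M - B)"
    by (rule uniformly_rigid_onI) (use G_close B_def in auto)
  ultimately show ?thesis using assms(3) by (intro bexI[of _ B]) auto
qed

theorem mainTheorem9:
  fixes M :: "'a::metric_space measure" and T :: "'a \<Rightarrow> 'a" and \<epsilon> :: real
  assumes "separable_space (euclidean :: 'a topology)"
    and "finite_measure M"
    and "radon_measure M"
    and "nonatomic M"
    and "\<And>U. open U \<Longrightarrow> U \<noteq> {} \<Longrightarrow> emeasure M U > 0"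
    and "invertible_measure_preserving M T"
    and "rigid M T"
    and "\<epsilon> > 0"
  shows "\<exists>B\<in>sets M. measure M B < \<epsilon> \<and> uniformly_rigid_on T (space M - B)"
proof -
  have sets_M: "sets M = sets borel" using assms(3) unfolding radon_measure_def by blast
  have space_M: "space M = UNIV" using sets_eq_imp_space_eq[OF sets_M] by simp
  have T_meas: "T \<in> measurable M M"
    using assms(6) unfolding invertible_measure_preserving_def by blast
  obtain n :: "nat \<Rightarrow> nat" where n_lim: "filterlim n at_top sequentially" and
    rig: "\<forall>A\<in>sets M. emeasure M A < \<infinity> \<longrightarrow>
        (\<lambda>k. measure M (sym_diff A ((T ^^ n k) ` A))) \<longlonglongrightarrow> 0"
    using assms(7) unfolding rigid_def by blast
  have "\<forall>\<^sub>F k in sequentially. \<exists>G\<in>sets M.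
      measure M (space M - G) < \<eta> \<and> (\<forall>x\<in>G. dist x ((T ^^ n k) x) < \<delta>)"
    if "\<delta> > 0" "\<eta> > 0" for \<delta> \<eta>
    using eventually_small_displacement[OF assms(1,2) sets_M measurable_funpow[OF T_meas]
        rigid_return_tendsto_zero[OF assms(2) space_M assms(6) rig] that] .
  then show ?thesis by (rule uniformly_rigid_off_small_set[OF assms(2) n_lim assms(8)])
qed

end
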